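(* Let $\{A_1,\dots,A_k\}\subseteq H_n$ and $\{B_1,\dots,B_k\}\subseteq H_m$ be two commuting families, and let $U\in M_n$, $V\in M_m$ be unitary matrices such that $U^*A_iU=\mathrm{diag}(a_{i1},\dots,a_{in})$ and $VB_iV^*=\mathrm{diag}(b_{i1},\dots,b_{im})$ for $i=1,\dots,k$. Let $(a_{ij})\in M_{k,n}$ and $(b_{ij})\in M_{k,m}$ be the real matrices formed from these diagonals. The following are equivalent: (a) there is a completely positive map $\Phi:M_n\to M_m$ with $\Phi(A_i)=B_i$ for $i=1,\dots,k$; (b) there is an $n\times m$ entrywise nonnegative matrix $D=(d_{pq})$ with $(b_{ij})=(a_{ij})D$. If (b) holds and, for $1\le j\le m$, $F_j\in M_{n,m}$ denotes the matrix whose $j$-th column is $(\sqrt{d_{1j}},\dots,\sqrt{d_{nj}})^t$ and whose other entries are zero, then $B_i=\sum_{j=1}^m (UF_jV)^*A_i(UF_jV)$ for $i=1,\dots,k$. Furthermore: (1) a map $\Phi$ as in (a) can be chosen unital if and only if $D$ in (b) can be chosen column stochastic; (2) a map $\Phi$ as in (a) can be chosen trace preserving if and only if $D$ in (b) can be chosen row stochastic; (3) a map $\Phi$ as in (a) can be chosen unital and trace preserving if and only if $D$ in (b) can be chosen doubly stochastic (in which case $m=n$).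
   Context: $H_n$ is the set of $n\times n$ complex Hermitian matrices. A linear map $\Phi:M_n\to M_m$ is completely positive if for every $k\ge1$ the map $(A_{ij})\mapsto(\Phi(A_{ij}))$ on $k\times k$ block matrices with blocks in $M_n$ sends positive semidefinite matrices to positive semidefinite matrices; it is unital if $\Phi(I_n)=I_m$ and trace preserving if $\mathrm{tr}\,\Phi(A)=\mathrm{tr}\,A$ for all $A$. A nonnegative matrix is column (resp. row) stochastic if every column (resp. row) sums to 1, and doubly stochastic if square and both row and column stochastic. *)

theory Defs
  imports "Jordan_Normal_Form.Matrix" Complex_Main
begin

text \<open>Matrices are Jordan_Normal_Form matrices; M_n = complex mat in carrier_mat n n.
  Indices are 0-based.\<close>

definition cadj :: "complex mat \<Rightarrow> complex mat" where
  "cadj A = mat (dim_col A) (dim_row A) (\<lambda>(i,j). cnj (A $$ (j,i)))"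

definition hermitian_mat :: "nat \<Rightarrow> complex mat \<Rightarrow> bool" where
  "hermitian_mat n A \<longleftrightarrow> A \<in> carrier_mat n n \<and> cadj A = A"

definition unitary_mat :: "nat \<Rightarrow> complex mat \<Rightarrow> bool" where
  "unitary_mat n U \<longleftrightarrow> U \<in> carrier_mat n n \<and> cadj U * U = 1\<^sub>m n \<and> U * cadj U = 1\<^sub>m n"

definition psd_mat :: "nat \<Rightarrow> complex mat \<Rightarrow> bool" where
  "psd_mat n A \<longleftrightarrow> hermitian_mat n A \<and>
     (\<forall>x \<in> carrier_vec n. Re (conjugate x \<bullet> (A *\<^sub>v x)) \<ge> 0 \<and> Im (conjugate x \<bullet> (A *\<^sub>v x)) = 0)"

definition mtrace :: "complex mat \<Rightarrow> complex" where
  "mtrace A = (\<Sum>i<dim_row A. A $$ (i,i))"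

definition block :: "nat \<Rightarrow> complex mat \<Rightarrow> nat \<Rightarrow> nat \<Rightarrow> complex mat" where
  "block n X i j = mat n n (\<lambda>(p,q). X $$ (i*n + p, j*n + q))"

text \<open>the k x k block matrix (A_ij) \<mapsto> (\<Phi>(A_ij)), with \<Phi> : M_n \<rightarrow> M_m\<close>
definition ampliate :: "nat \<Rightarrow> nat \<Rightarrow> nat \<Rightarrow> (complex mat \<Rightarrow> complex mat) \<Rightarrow> complex mat \<Rightarrow> complex mat" where
  "ampliate n m k \<Phi> X = mat (k*m) (k*m)
     (\<lambda>(r,c). \<Phi> (block n X (r div m) (c div m)) $$ (r mod m, c mod m))"

definition linear_map_mat :: "nat \<Rightarrow> nat \<Rightarrow> (complex mat \<Rightarrow> complex mat) \<Rightarrow> bool" where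
  "linear_map_mat n m \<Phi> \<longleftrightarrow>
     (\<forall>X \<in> carrier_mat n n. \<Phi> X \<in> carrier_mat m m) \<and>
     (\<forall>X \<in> carrier_mat n n. \<forall>Y \<in> carrier_mat n n. \<Phi> (X + Y) = \<Phi> X + \<Phi> Y) \<and>
     (\<forall>X \<in> carrier_mat n n. \<forall>c. \<Phi> (c \<cdot>\<^sub>m X) = c \<cdot>\<^sub>m \<Phi> X)"

definition completely_positive :: "nat \<Rightarrow> nat \<Rightarrow> (complex mat \<Rightarrow> complex mat) \<Rightarrow> bool" where
  "completely_positive n m \<Phi> \<longleftrightarrow> linear_map_mat n m \<Phi> \<and>
     (\<forall>k\<ge>1. \<forall>X. psd_mat (k*n) X \<longrightarrow> psd_mat (k*m) (ampliate n m k \<Phi> X))"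

definition unital_map :: "nat \<Rightarrow> nat \<Rightarrow> (complex mat \<Rightarrow> complex mat) \<Rightarrow> bool" where
  "unital_map n m \<Phi> \<longleftrightarrow> \<Phi> (1\<^sub>m n) = 1\<^sub>m m"

definition trace_preserving :: "nat \<Rightarrow> (complex mat \<Rightarrow> complex mat) \<Rightarrow> bool" where
  "trace_preserving n \<Phi> \<longleftrightarrow> (\<forall>X \<in> carrier_mat n n. mtrace (\<Phi> X) = mtrace X)"

definition nonneg_mat :: "real mat \<Rightarrow> bool" where
  "nonneg_mat D \<longleftrightarrow> (\<forall>i<dim_row D. \<forall>j<dim_col D. D $$ (i,j) \<ge> 0)"

definition column_stochastic :: "real mat \<Rightarrow> bool" where
  "column_stochastic D \<longleftrightarrow> nonneg_mat D \<and> (\<forall>j<dim_col D. (\<Sum>i<dim_row D. D $$ (i,j)) = 1)"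

definition row_stochastic :: "real mat \<Rightarrow> bool" where
  "row_stochastic D \<longleftrightarrow> nonneg_mat D \<and> (\<forall>i<dim_row D. (\<Sum>j<dim_col D. D $$ (i,j)) = 1)"

definition doubly_stochastic :: "real mat \<Rightarrow> bool" where
  "doubly_stochastic D \<longleftrightarrow> dim_row D = dim_col D \<and> column_stochastic D \<and> row_stochastic D"

definition cdiag :: "nat \<Rightarrow> (nat \<Rightarrow> real) \<Rightarrow> complex mat" where
  "cdiag n f = mat n n (\<lambda>(i,j). if i = j then complex_of_real (f i) else 0)"

definition Fmat :: "real mat \<Rightarrow> nat \<Rightarrow> complex mat" where
  "Fmat D j = mat (dim_row D) (dim_col D)
     (\<lambda>(p,q). if q = j then complex_of_real (sqrt (D $$ (p,j))) else 0)"

definition msum :: "nat \<Rightarrow> nat \<Rightarrow> ('i \<Rightarrow> complex mat) \<Rightarrow> 'i set \<Rightarrow> complex mat" where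
  "msum d1 d2 f J = mat d1 d2 (\<lambda>(r,c). \<Sum>j\<in>J. f j $$ (r,c))"

end

theory Submission
  imports Defs
begin

(*
  Necessity.  For a completely positive Phi the transition matrix
  T(Phi)_pq = (V Phi(u_p u_p* ) V* )_qq, with u_p the columns of U, is nonnegative because Phi is
  positive.  Expanding A_i = sum_p a_ip u_p u_p* and using linearity gives b = a T(Phi); if Phi is
  unital (trace preserving) then T(Phi) is column (row) stochastic.

  Sufficiency.  Maps in Kraus form X |-> sum_j K_j* X K_j are completely positive: each congruence
  is completely positive by a block-wise quadratic form computation, and completely positive maps
  are closed under sums.  For D >= 0 the Kraus family U E_pq V with E_pq = sqrt(d_pq) e_p e_q^T
  sends diag(alpha) to diag(alpha D) after conjugation by U and V, hence A_i to B_i; it is unital for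
  column stochastic D and trace preserving for row stochastic D.  The column operators F_j of the
  statement also send diag(alpha) to diag(alpha D), which gives the explicit Kraus formula for B_i.
  A unital trace preserving map has m = tr Phi(I) = tr I = n.
*)

lemma mult_entry:
  "A \<in> carrier_mat a b \<Longrightarrow> B \<in> carrier_mat b c \<Longrightarrow> i < a \<Longrightarrow> j < c \<Longrightarrow>
   (A * B) $$ (i,j) = (\<Sum>l<b. A $$ (i,l) * B $$ (l,j))"
  by (auto simp: scalar_prod_def atLeast0LessThan intro!: sum.cong)

lemma cadj_carrier [simp]: "X \<in> carrier_mat a b \<Longrightarrow> cadj X \<in> carrier_mat b a"
  by (simp add: cadj_def)

lemma cadj_dims [simp]: "dim_row (cadj X) = dim_col X" "dim_col (cadj X) = dim_row X"
  by (simp_all add: cadj_def)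

lemma cadj_entry [simp]: "i < dim_col X \<Longrightarrow> j < dim_row X \<Longrightarrow> cadj X $$ (i,j) = cnj (X $$ (j,i))"
  by (simp add: cadj_def)

lemma cadj_cadj [simp]: "cadj (cadj X) = X"
  by (auto simp: cadj_def intro!: eq_matI)

lemma cadj_mult:
  assumes A: "A \<in> carrier_mat a b" and B: "B \<in> carrier_mat b c"
  shows "cadj (A * B) = cadj B * cadj A"
proof (rule eq_matI)
  fix i j assume "i < dim_row (cadj B * cadj A)" "j < dim_col (cadj B * cadj A)"
  then have ij: "i < c" "j < a" using A B by auto
  have "cadj (A * B) $$ (i,j) = cnj (\<Sum>l<b. A $$ (j,l) * B $$ (l,i))"
    using A B ij mult_entry[OF A B ij(2,1)] by simp
  also have "\<dots> = (\<Sum>l<b. cadj B $$ (i,l) * cadj A $$ (l,j))"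
    using A B ij by (simp add: cnj_sum mult.commute)
  also have "\<dots> = (cadj B * cadj A) $$ (i,j)"
    using A B ij mult_entry[of "cadj B" c b "cadj A" a i j] by simp
  finally show "cadj (A * B) $$ (i,j) = (cadj B * cadj A) $$ (i,j)" .
qed (use A B in auto)

lemma unitary_carrier: "unitary_mat N U \<Longrightarrow> U \<in> carrier_mat N N"
  by (simp add: unitary_mat_def)

lemma unitary_cadj: "unitary_mat N U \<Longrightarrow> unitary_mat N (cadj U)"
  by (simp add: unitary_mat_def)

lemma unitary_unconjugate:
  assumes U: "unitary_mat N U" and A: "A \<in> carrier_mat N N" and C: "cadj U * A * U = C"
  shows "A = U * C * cadj U"
proof -
  have Uc: "U \<in> carrier_mat N N" and r: "U * cadj U = 1\<^sub>m N"
    using U by (auto simp: unitary_mat_def)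
  have "U * C * cadj U = (U * cadj U) * A * (U * cadj U)"
  proof -
    have sq: "X * Y \<in> carrier_mat N N" if "X \<in> carrier_mat N N" "Y \<in> carrier_mat N N" for X Y
      using that by simp
    show ?thesis unfolding C[symmetric] using Uc A by (simp add: assoc_mult_mat[of _ N N _ N _ N] sq)
  qed
  then show ?thesis using r A by simp
qed

lemma unitary_conj_one: "unitary_mat N U \<Longrightarrow> cadj U * 1\<^sub>m N * U = 1\<^sub>m N"
  using right_mult_one_mat[OF cadj_carrier[OF unitary_carrier]] by (simp add: unitary_mat_def)

lemma qf_entry:
  "A \<in> carrier_mat n n \<Longrightarrow> x \<in> carrier_vec n \<Longrightarrow>
   conjugate x \<bullet> (A *\<^sub>v x) = (\<Sum>i<n. cnj (x$i) * (\<Sum>j<n. A$$(i,j) * x$j))"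
  by (auto simp: scalar_prod_def atLeast0LessThan intro!: sum.cong)

lemma hermitian_entry: "hermitian_mat N X \<Longrightarrow> i < N \<Longrightarrow> j < N \<Longrightarrow> X$$(i,j) = cnj (X$$(j,i))"
  unfolding hermitian_mat_def by (metis cadj_entry carrier_matD)

lemma mtrace_mult_comm:
  assumes A: "A \<in> carrier_mat a b" and B: "B \<in> carrier_mat b a"
  shows "mtrace (A * B) = mtrace (B * A)"
proof -
  have "mtrace (A * B) = (\<Sum>i<a. \<Sum>l<b. A $$ (i,l) * B $$ (l,i))"
    unfolding mtrace_def using A B by (intro sum.cong refl) (use mult_entry[OF A B] in auto)
  also have "\<dots> = (\<Sum>l<b. \<Sum>i<a. B $$ (l,i) * A $$ (i,l))"
    by (subst sum.swap) (simp add: mult.commute)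
  also have "\<dots> = mtrace (B * A)"
    unfolding mtrace_def using A B by (intro sum.cong refl) (use mult_entry[OF B A] in auto)
  finally show ?thesis .
qed

lemma mtrace_unitary_conj:
  assumes W: "unitary_mat N W" and M: "M \<in> carrier_mat N N"
  shows "mtrace (W * M * cadj W) = mtrace M"
proof -
  have Wc: "W \<in> carrier_mat N N" and r: "cadj W * W = 1\<^sub>m N" using W by (auto simp: unitary_mat_def)
  have "mtrace (W * M * cadj W) = mtrace (cadj W * (W * M))"
    using Wc M by (intro mtrace_mult_comm[of _ N N]) auto
  also have "\<dots> = mtrace M" using Wc M r by (simp add: assoc_mult_mat[symmetric, of _ N N _ N _ N])
  finally show ?thesis .
qed

lemma mtrace_one: "mtrace (1\<^sub>m N) = of_nat N"
  by (simp add: mtrace_def)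

lemma cdiag_one: "cdiag N (\<lambda>_. 1) = 1\<^sub>m N"
  by (auto simp: cdiag_def intro!: eq_matI)

lemma msum_cong: "(\<And>j. j \<in> J \<Longrightarrow> f j = g j) \<Longrightarrow> msum d1 d2 f J = msum d1 d2 g J"
  by (simp add: msum_def)

lemma msum_carrier [simp]: "msum d1 d2 f J \<in> carrier_mat d1 d2"
  by (simp add: msum_def)

lemma msum_empty: "msum d1 d2 f {} = 0\<^sub>m d1 d2"
  by (auto simp: msum_def intro!: eq_matI)

lemma msum_insert:
  "finite J \<Longrightarrow> j \<notin> J \<Longrightarrow> f j \<in> carrier_mat d1 d2 \<Longrightarrow>
   msum d1 d2 f (insert j J) = f j + msum d1 d2 f J"
  by (auto simp: msum_def intro!: eq_matI)

lemma linear_map_msum: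
  assumes L: "linear_map_mat n m \<Phi>" and J: "finite J" and P: "\<forall>j\<in>J. P j \<in> carrier_mat n n"
  shows "\<Phi> (msum n n P J) = msum m m (\<lambda>j. \<Phi> (P j)) J"
  using J P
proof (induction J rule: finite_induct)
  case empty
  have Z: "0\<^sub>m n n \<in> carrier_mat n n" "\<Phi> (0\<^sub>m n n) \<in> carrier_mat m m"
    using L by (auto simp: linear_map_mat_def)
  have "\<Phi> (0\<^sub>m n n) = \<Phi> (0 \<cdot>\<^sub>m 0\<^sub>m n n)" by simp
  also have "\<dots> = 0 \<cdot>\<^sub>m \<Phi> (0\<^sub>m n n)" using L Z unfolding linear_map_mat_def by blast
  also have "\<dots> = 0\<^sub>m m m" using Z by auto
  finally show ?case by (simp add: msum_empty)
next
  case (insert j J)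
  have Pj: "P j \<in> carrier_mat n n" and PJ: "\<forall>i\<in>J. P i \<in> carrier_mat n n"
    using insert.prems by auto
  have "\<Phi> (msum n n P (insert j J)) = \<Phi> (P j) + \<Phi> (msum n n P J)"
    using L Pj insert.hyps by (simp add: msum_insert linear_map_mat_def)
  also have "\<dots> = msum m m (\<lambda>i. \<Phi> (P i)) (insert j J)"
    using L Pj insert.hyps insert.IH[OF PJ] by (simp add: msum_insert linear_map_mat_def)
  finally show ?case .
qed

lemma linear_map_lincomb:
  assumes L: "linear_map_mat n m \<Phi>" and J: "finite J" and P: "\<forall>j\<in>J. P j \<in> carrier_mat n n"
  shows "\<Phi> (msum n n (\<lambda>j. c j \<cdot>\<^sub>m P j) J) = msum m m (\<lambda>j. c j \<cdot>\<^sub>m \<Phi> (P j)) J"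
proof -
  have "\<Phi> (msum n n (\<lambda>j. c j \<cdot>\<^sub>m P j) J) = msum m m (\<lambda>j. \<Phi> (c j \<cdot>\<^sub>m P j)) J"
    using P by (intro linear_map_msum[OF L J]) simp
  also have "\<dots> = msum m m (\<lambda>j. c j \<cdot>\<^sub>m \<Phi> (P j)) J"
    using L P by (intro msum_cong) (simp add: linear_map_mat_def)
  finally show ?thesis .
qed

lemma linear_map_msum_family:
  assumes L: "\<forall>j\<in>J. linear_map_mat n m (F j)"
  shows "linear_map_mat n m (\<lambda>X. msum m m (\<lambda>j. F j X) J)"
  unfolding linear_map_mat_def
proof (intro conjI ballI allI)
  fix X Y :: "complex mat" assume X: "X \<in> carrier_mat n n" and Y: "Y \<in> carrier_mat n n"
  have "F j (X + Y) = F j X + F j Y" "F j Y \<in> carrier_mat m m"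
    if "j \<in> J" for j using L that X Y by (auto simp: linear_map_mat_def)
  then have "F j (X + Y) = F j X + F j Y" "dim_row (F j Y) = m" "dim_col (F j Y) = m"
    if "j \<in> J" for j using that by auto
  then show "msum m m (\<lambda>j. F j (X + Y)) J = msum m m (\<lambda>j. F j X) J + msum m m (\<lambda>j. F j Y) J"
    by (auto simp: msum_def sum.distrib[symmetric] intro!: eq_matI sum.cong)
next
  fix X :: "complex mat" and c assume X: "X \<in> carrier_mat n n"
  have "F j (c \<cdot>\<^sub>m X) = c \<cdot>\<^sub>m F j X" "F j X \<in> carrier_mat m m"
    if "j \<in> J" for j using L that X by (auto simp: linear_map_mat_def)
  then have "F j (c \<cdot>\<^sub>m X) = c \<cdot>\<^sub>m F j X" "dim_row (F j X) = m" "dim_col (F j X) = m"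
    if "j \<in> J" for j using that by auto
  then show "msum m m (\<lambda>j. F j (c \<cdot>\<^sub>m X)) J = c \<cdot>\<^sub>m msum m m (\<lambda>j. F j X) J"
    by (auto simp: msum_def sum_distrib_left intro!: eq_matI sum.cong)
qed simp

section \<open>Kraus maps are completely positive\<close>

lemma psd_msum:
  assumes psd: "\<forall>j\<in>J. psd_mat N (M j)"
  shows "psd_mat N (msum N N M J)"
  unfolding psd_mat_def hermitian_mat_def
proof (intro conjI ballI msum_carrier)
  show "cadj (msum N N M J) = msum N N M J"
    using psd by (auto simp: msum_def psd_mat_def cnj_sum intro!: eq_matI sum.cong)
      (metis hermitian_entry)
next
  fix x :: "complex vec" assume x: "x \<in> carrier_vec N"
  have Mc: "M j \<in> carrier_mat N N" if "j \<in> J" for j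
    using psd that by (simp add: psd_mat_def hermitian_mat_def)
  have "conjugate x \<bullet> (msum N N M J *\<^sub>v x) = (\<Sum>i<N. \<Sum>l<N. \<Sum>j\<in>J. cnj (x$i) * M j $$ (i,l) * x$l)"
    by (subst qf_entry[OF msum_carrier x]) (simp add: msum_def sum_distrib_left sum_distrib_right mult_ac)
  also have "\<dots> = (\<Sum>j\<in>J. \<Sum>i<N. \<Sum>l<N. cnj (x$i) * M j $$ (i,l) * x$l)"
    by (simp add: sum.swap[of _ _ J])
  also have "\<dots> = (\<Sum>j\<in>J. conjugate x \<bullet> (M j *\<^sub>v x))"
    by (intro sum.cong refl) (simp add: qf_entry[OF Mc x] sum_distrib_left mult_ac)
  finally have qf: "conjugate x \<bullet> (msum N N M J *\<^sub>v x) = (\<Sum>j\<in>J. conjugate x \<bullet> (M j *\<^sub>v x))" .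
  show "Re (conjugate x \<bullet> (msum N N M J *\<^sub>v x)) \<ge> 0" "Im (conjugate x \<bullet> (msum N N M J *\<^sub>v x)) = 0"
    unfolding qf using psd x by (auto simp: psd_mat_def Re_sum Im_sum intro: sum_nonneg)
qed

lemma ampliate_msum:
  "ampliate n m k (\<lambda>X. msum m m (\<lambda>j. F j X) J) X = msum (k*m) (k*m) (\<lambda>j. ampliate n m k (F j) X) J"
proof (rule eq_matI)
  fix r c assume "r < dim_row (msum (k*m) (k*m) (\<lambda>j. ampliate n m k (F j) X) J)"
    "c < dim_col (msum (k*m) (k*m) (\<lambda>j. ampliate n m k (F j) X) J)"
  then have "r < k*m" "c < k*m" by (auto simp: msum_def)
  then have "m > 0" by (cases m) auto
  then have "r mod m < m" "c mod m < m" by simp_all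
  with \<open>r < k*m\<close> \<open>c < k*m\<close> show "ampliate n m k (\<lambda>X. msum m m (\<lambda>j. F j X) J) X $$ (r,c) =
      msum (k*m) (k*m) (\<lambda>j. ampliate n m k (F j) X) J $$ (r,c)"
    by (simp add: ampliate_def msum_def)
qed (simp_all add: ampliate_def msum_def)

lemma completely_positive_msum:
  assumes cp: "\<forall>j\<in>J. completely_positive n m (F j)"
  shows "completely_positive n m (\<lambda>X. msum m m (\<lambda>j. F j X) J)"
  unfolding completely_positive_def
proof (intro conjI allI impI)
  show "linear_map_mat n m (\<lambda>X. msum m m (\<lambda>j. F j X) J)"
    using cp by (intro linear_map_msum_family) (simp add: completely_positive_def)
  fix k :: nat and X assume "k \<ge> 1" "psd_mat (k*n) X"
  then show "psd_mat (k*m) (ampliate n m k (\<lambda>X. msum m m (\<lambda>j. F j X) J) X)"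
    using cp unfolding ampliate_msum completely_positive_def by (intro psd_msum) blast
qed

lemma sum_blocks:
  fixes f :: "nat \<Rightarrow> 'a::comm_monoid_add"
  shows "(\<Sum>r<k*N. f r) = (\<Sum>a<k. \<Sum>i<N. f (a*N + i))"
proof -
  have "(\<Sum>r<k*N. f r) = (\<Sum>a<k. sum f {a*N..<a*N+N})"
    using sum.nat_group[of f N k] by simp
  also have "\<dots> = (\<Sum>a<k. \<Sum>i<N. f (a*N + i))"
  proof (rule sum.cong[OF refl])
    fix a
    have "sum f {a*N..<a*N+N} = sum f {0+a*N..<N+a*N}" by (simp add: add.commute)
    also have "\<dots> = (\<Sum>i\<in>{0..<N}. f (i + a*N))" by (rule sum.shift_bounds_nat_ivl)
    finally show "sum f {a*N..<a*N+N} = (\<Sum>i<N. f (a*N + i))" by (simp add: atLeast0LessThan add.commute)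
  qed
  finally show ?thesis .
qed

lemma block_index_bound: "a < k \<Longrightarrow> i < N \<Longrightarrow> a*N + i < k*(N::nat)"
proof -
  assume "a < k" "i < N"
  then have "a*N + i < Suc a * N" by simp
  also have "\<dots> \<le> k*N" using \<open>a < k\<close> by (intro mult_le_mono1) simp
  finally show ?thesis .
qed

lemma block_decompose:
  fixes r k m :: nat
  assumes "r < k*m"
  obtains a s where "r = a*m + s" "a < k" "s < m"
proof
  have "m > 0" using assms by (cases m) auto
  then show "r = r div m * m + r mod m" "r mod m < m" by simp_all
  show "r div m < k" using assms by (simp add: less_mult_imp_div_less)
qed

lemma block_qf:
  assumes M: "M \<in> carrier_mat (k*N) (k*N)" and y: "y \<in> carrier_vec (k*N)"
  shows "conjugate y \<bullet> (M *\<^sub>v y) =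
    (\<Sum>a<k. \<Sum>b<k. \<Sum>i<N. \<Sum>l<N. cnj (y$(a*N+i)) * M$$(a*N+i, b*N+l) * y$(b*N+l))"
proof -
  have "conjugate y \<bullet> (M *\<^sub>v y) =
      (\<Sum>a<k. \<Sum>i<N. cnj (y$(a*N+i)) * (\<Sum>b<k. \<Sum>l<N. M$$(a*N+i, b*N+l) * y$(b*N+l)))"
    by (simp only: qf_entry[OF M y] sum_blocks)
  also have "\<dots> = (\<Sum>a<k. \<Sum>i<N. \<Sum>b<k. \<Sum>l<N. cnj (y$(a*N+i)) * M$$(a*N+i, b*N+l) * y$(b*N+l))"
    by (simp add: sum_distrib_left mult.assoc)
  also have "\<dots> = (\<Sum>a<k. \<Sum>b<k. \<Sum>i<N. \<Sum>l<N. cnj (y$(a*N+i)) * M$$(a*N+i, b*N+l) * y$(b*N+l))"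
    by (intro sum.cong refl sum.swap)
  finally show ?thesis .
qed

lemma congruence_carrier [simp]:
  "K \<in> carrier_mat n m \<Longrightarrow> X \<in> carrier_mat n n \<Longrightarrow> cadj K * X * K \<in> carrier_mat m m"
  by (metis cadj_carrier mult_carrier_mat)

lemma congruence_entry:
  assumes K: "K \<in> carrier_mat n m" and X: "X \<in> carrier_mat n n" and st: "s < m" "t < m"
  shows "(cadj K * X * K) $$ (s,t) = (\<Sum>i<n. \<Sum>l<n. cnj (K$$(i,s)) * X$$(i,l) * K$$(l,t))"
proof -
  have KX: "cadj K * X \<in> carrier_mat m n" using mult_carrier_mat[OF cadj_carrier[OF K] X] .
  have "(cadj K * X * K) $$ (s,t) = (\<Sum>l<n. (cadj K * X) $$ (s,l) * K$$(l,t))"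
    by (rule mult_entry[OF KX K st])
  also have "\<dots> = (\<Sum>l<n. (\<Sum>i<n. cnj (K$$(i,s)) * X$$(i,l)) * K$$(l,t))"
    using K X st by (intro sum.cong refl) (use mult_entry[of "cadj K" m n X n s] in auto)
  also have "\<dots> = (\<Sum>i<n. \<Sum>l<n. cnj (K$$(i,s)) * X$$(i,l) * K$$(l,t))"
    by (subst sum.swap) (simp add: sum_distrib_right)
  finally show ?thesis .
qed

lemma congruence_linear:
  assumes K: "K \<in> carrier_mat n m"
  shows "linear_map_mat n m (\<lambda>X. cadj K * X * K)"
  unfolding linear_map_mat_def
proof (intro conjI ballI allI)
  have K': "cadj K \<in> carrier_mat m n" using K by simp
  fix X Y :: "complex mat" assume X: "X \<in> carrier_mat n n" and Y: "Y \<in> carrier_mat n n"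
  show "cadj K * (X + Y) * K = cadj K * X * K + cadj K * Y * K"
    using mult_add_distrib_mat[OF K' X Y]
      add_mult_distrib_mat[OF mult_carrier_mat[OF K' X] mult_carrier_mat[OF K' Y] K] by simp
next
  have K': "cadj K \<in> carrier_mat m n" using K by simp
  fix X :: "complex mat" and c assume X: "X \<in> carrier_mat n n"
  show "cadj K * (c \<cdot>\<^sub>m X) * K = c \<cdot>\<^sub>m (cadj K * X * K)"
    using mult_smult_distrib[OF K' X] mult_smult_assoc_mat[OF mult_carrier_mat[OF K' X] K] by simp
  show "cadj K * X * K \<in> carrier_mat m m" using X K by simp
qed

lemma congruence_ampliate_entry:
  assumes K: "K \<in> carrier_mat n m" and ab: "a < k" "b < k" and st: "s < m" "t < m"
  shows "ampliate n m k (\<lambda>X. cadj K * X * K) X $$ (a*m+s, b*m+t) =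
    (\<Sum>i<n. \<Sum>l<n. cnj (K$$(i,s)) * X$$(a*n+i, b*n+l) * K$$(l,t))"
proof -
  have idx: "(a*m+s) div m = a" "(a*m+s) mod m = s" "(b*m+t) div m = b" "(b*m+t) mod m = t"
    using st by auto
  show ?thesis
    using K st block_index_bound[OF ab(1) st(1)] block_index_bound[OF ab(2) st(2)]
      congruence_entry[OF K _ st, of "block n X a b"]
    by (simp add: ampliate_def idx block_def)
qed

lemma congruence_ampliate_hermitian:
  assumes K: "K \<in> carrier_mat n m" and X: "hermitian_mat (k*n) X"
  shows "hermitian_mat (k*m) (ampliate n m k (\<lambda>X. cadj K * X * K) X)"
    (is "hermitian_mat _ ?M")
  unfolding hermitian_mat_def
proof (intro conjI eq_matI)
  fix r c assume "r < dim_row ?M" "c < dim_col ?M"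
  then have "r < k*m" "c < k*m" by (simp_all add: ampliate_def)
  then obtain a s b t where rc: "r = a*m + s" "c = b*m + t" and bnd: "a < k" "s < m" "b < k" "t < m"
    by (metis block_decompose)
  have Xe: "X $$ (a*n+i, b*n+l) = cnj (X $$ (b*n+l, a*n+i))" if "i < n" "l < n" for i l
    using hermitian_entry[OF X] block_index_bound bnd that by blast
  have "cadj ?M $$ (r,c) = cnj (?M $$ (b*m+t, a*m+s))"
    using \<open>r < k*m\<close> \<open>c < k*m\<close> rc by (simp add: ampliate_def)
  also have "\<dots> = (\<Sum>l<n. \<Sum>i<n. cnj (K$$(i,s)) * X$$(a*n+i, b*n+l) * K$$(l,t))"
    using bnd by (simp add: congruence_ampliate_entry[OF K] cnj_sum Xe mult_ac)
  also have "\<dots> = ?M $$ (r,c)"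
    unfolding rc using bnd by (subst sum.swap) (simp add: congruence_ampliate_entry[OF K])
  finally show "cadj ?M $$ (r,c) = ?M $$ (r,c)" .
qed (simp_all add: ampliate_def)

lemma sum_swap_pairs:
  "(\<Sum>x\<in>A. \<Sum>y\<in>B. \<Sum>u\<in>C. \<Sum>v\<in>D. f x y u v) = (\<Sum>u\<in>C. \<Sum>v\<in>D. \<Sum>x\<in>A. \<Sum>y\<in>B. f x y u v)"
proof -
  have "(\<Sum>x\<in>A. \<Sum>y\<in>B. \<Sum>u\<in>C. \<Sum>v\<in>D. f x y u v) = (\<Sum>x\<in>A. \<Sum>u\<in>C. \<Sum>v\<in>D. \<Sum>y\<in>B. f x y u v)"
    by (intro sum.cong refl) (simp add: sum.swap[of _ B] sum.swap[of _ _ D])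
  also have "\<dots> = (\<Sum>u\<in>C. \<Sum>v\<in>D. \<Sum>x\<in>A. \<Sum>y\<in>B. f x y u v)"
    by (simp add: sum.swap[of _ A])
  finally show ?thesis .
qed

text \<open>The key identity: the quadratic form of the ampliated congruence at \<open>y\<close> is the quadratic
  form of \<open>X\<close> at the vector obtained by applying \<open>K\<close> blockwise to \<open>y\<close>.\<close>
lemma congruence_ampliate_qf:
  assumes K: "K \<in> carrier_mat n m" and X: "X \<in> carrier_mat (k*n) (k*n)" and y: "y \<in> carrier_vec (k*m)"
  defines "z \<equiv> vec (k*n) (\<lambda>R. \<Sum>s<m. K$$(R mod n, s) * y$(R div n * m + s))"
  shows "conjugate y \<bullet> (ampliate n m k (\<lambda>X. cadj K * X * K) X *\<^sub>v y) = conjugate z \<bullet> (X *\<^sub>v z)"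
proof -
  let ?f = "\<lambda>a b s t i l. cnj (y$(a*m+s)) * cnj (K$$(i,s)) * X$$(a*n+i, b*n+l) * (K$$(l,t) * y$(b*m+t))"
  have M: "ampliate n m k (\<lambda>X. cadj K * X * K) X \<in> carrier_mat (k*m) (k*m)"
    by (simp add: ampliate_def)
  have z: "z \<in> carrier_vec (k*n)" by (simp add: z_def)
  have ze: "z $ (a*n+i) = (\<Sum>s<m. K$$(i,s) * y$(a*m+s))" if "a < k" "i < n" for a i
    using that block_index_bound[OF that] by (simp add: z_def)
  have "conjugate y \<bullet> (ampliate n m k (\<lambda>X. cadj K * X * K) X *\<^sub>v y) =
      (\<Sum>a<k. \<Sum>b<k. \<Sum>s<m. \<Sum>t<m. \<Sum>i<n. \<Sum>l<n. ?f a b s t i l)"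
    by (simp add: block_qf[OF M y] congruence_ampliate_entry[OF K] sum_distrib_left sum_distrib_right mult_ac)
  also have "\<dots> = (\<Sum>a<k. \<Sum>b<k. \<Sum>i<n. \<Sum>l<n. \<Sum>s<m. \<Sum>t<m. ?f a b s t i l)"
    by (intro sum.cong refl sum_swap_pairs)
  also have "\<dots> = (\<Sum>a<k. \<Sum>b<k. \<Sum>i<n. \<Sum>l<n. cnj (z$(a*n+i)) * X$$(a*n+i, b*n+l) * z$(b*n+l))"
    by (intro sum.cong refl) (simp add: ze cnj_sum sum_distrib_left sum_distrib_right mult_ac)
  also have "\<dots> = conjugate z \<bullet> (X *\<^sub>v z)"
    by (rule block_qf[OF X z, symmetric])
  finally show ?thesis .
qed

lemma congruence_cp:
  assumes K: "K \<in> carrier_mat n m"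
  shows "completely_positive n m (\<lambda>X. cadj K * X * K)"
  unfolding completely_positive_def
proof (intro conjI allI impI congruence_linear[OF K])
  fix k :: nat and X assume "k \<ge> 1" and psd: "psd_mat (k*n) X"
  then have herm: "hermitian_mat (k*n) X" and Xc: "X \<in> carrier_mat (k*n) (k*n)"
    by (auto simp: psd_mat_def hermitian_mat_def)
  show "psd_mat (k*m) (ampliate n m k (\<lambda>X. cadj K * X * K) X)"
    unfolding psd_mat_def
  proof (intro conjI ballI congruence_ampliate_hermitian[OF K herm])
    fix y :: "complex vec" assume y: "y \<in> carrier_vec (k*m)"
    let ?z = "vec (k*n) (\<lambda>R. \<Sum>s<m. K$$(R mod n, s) * y$(R div n * m + s))"
    have "?z \<in> carrier_vec (k*n)" by simp
    then show "Re (conjugate y \<bullet> (ampliate n m k (\<lambda>X. cadj K * X * K) X *\<^sub>v y)) \<ge> 0"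
      "Im (conjugate y \<bullet> (ampliate n m k (\<lambda>X. cadj K * X * K) X *\<^sub>v y)) = 0"
      using psd unfolding congruence_ampliate_qf[OF K Xc y] psd_mat_def by blast+
  qed
qed

definition kraus_map :: "nat \<Rightarrow> ('j \<Rightarrow> complex mat) \<Rightarrow> 'j set \<Rightarrow> complex mat \<Rightarrow> complex mat" where
  "kraus_map m K J X = msum m m (\<lambda>j. cadj (K j) * X * K j) J"

lemma kraus_map_cp:
  assumes "\<forall>j\<in>J. K j \<in> carrier_mat n m"
  shows "completely_positive n m (kraus_map m K J)"
  unfolding kraus_map_def[abs_def] using assms by (intro completely_positive_msum) (simp add: congruence_cp)

text \<open>Associativity with dimension side conditions that the simplifier can discharge.\<close>
lemma mult_assoc_dims:
  "dim_col A = dim_row B \<Longrightarrow> dim_col B = dim_row C \<Longrightarrow> A * B * C = A * (B * C)"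
  by (rule assoc_mult_mat[of A "dim_row A" "dim_col A" B "dim_col B" C "dim_col C"]) auto

lemma congruence_compose:
  assumes U: "U \<in> carrier_mat n n" and G: "G \<in> carrier_mat n m" and V: "V \<in> carrier_mat m m"
    and X: "X \<in> carrier_mat n n"
  shows "cadj (U * G * V) * X * (U * G * V) = cadj V * (cadj G * (cadj U * X * U) * G) * V"
proof -
  have "cadj (U * G * V) = cadj V * (cadj G * cadj U)"
    using cadj_mult[OF mult_carrier_mat[OF U G] V] cadj_mult[OF U G] by simp
  then show ?thesis
    using U G V X by (simp only:) (simp add: mult_assoc_dims)
qed

lemma kraus_map_frame:
  assumes J: "finite J" and U: "U \<in> carrier_mat n n" and V: "V \<in> carrier_mat m m"
    and G: "\<forall>j\<in>J. G j \<in> carrier_mat n m" and X: "X \<in> carrier_mat n n"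
  shows "kraus_map m (\<lambda>j. U * G j * V) J X = cadj V * kraus_map m G J (cadj U * X * U) * V"
proof -
  have Y: "cadj U * X * U \<in> carrier_mat n n" using U X by simp
  have "kraus_map m (\<lambda>j. U * G j * V) J X = msum m m (\<lambda>j. cadj V * (cadj (G j) * (cadj U * X * U) * G j) * V) J"
    unfolding kraus_map_def using G by (intro msum_cong congruence_compose[OF U _ V X]) blast
  also have "\<dots> = cadj V * kraus_map m G J (cadj U * X * U) * V"
    unfolding kraus_map_def using J G Y
    by (intro linear_map_msum[OF congruence_linear[OF V], symmetric]) (auto intro: congruence_carrier)
  finally show ?thesis .
qed

section \<open>Two Kraus families built from a nonnegative matrix\<close>

text \<open>For \<open>D = (d\<^sub>p\<^sub>q) \<ge> 0\<close> we use the operators \<open>E\<^sub>p\<^sub>q = \<surd>d\<^sub>p\<^sub>q e\<^sub>p e\<^sub>q\<^sup>T\<close>.  Both they and the column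
  operators \<open>F\<^sub>j\<close> of the statement send \<open>diag(\<alpha>)\<close> to \<open>diag(\<alpha> D)\<close>, but only the \<open>E\<^sub>p\<^sub>q\<close> also
  discard the off-diagonal part of the input, which is what makes trace preservation work.\<close>
definition dephasing_op :: "real mat \<Rightarrow> nat \<times> nat \<Rightarrow> complex mat" where
  "dephasing_op D pq = mat (dim_row D) (dim_col D)
     (\<lambda>it. if it = pq then complex_of_real (sqrt (D $$ pq)) else 0)"

lemma dephasing_op_carrier: "D \<in> carrier_mat n m \<Longrightarrow> dephasing_op D pq \<in> carrier_mat n m"
  by (simp add: dephasing_op_def)

lemma Fmat_carrier: "D \<in> carrier_mat n m \<Longrightarrow> Fmat D j \<in> carrier_mat n m"
  by (simp add: Fmat_def)

lemma if_zero_mult: "(if P then x else 0) * y = (if P then x * y else (0::'a::mult_zero))"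
  by simp

lemma mult_if_zero: "y * (if P then x else 0) = (if P then y * x else (0::'a::mult_zero))"
  by simp

lemma sqrt_square_complex: "x \<ge> 0 \<Longrightarrow> complex_of_real (sqrt x) * complex_of_real (sqrt x) = complex_of_real x"
  by (simp flip: of_real_mult)

lemma dephasing_sandwich:
  assumes D: "D \<in> carrier_mat n m" "nonneg_mat D" and pq: "p < n" "q < m" and Y: "Y \<in> carrier_mat n n"
  shows "cadj (dephasing_op D (p,q)) * Y * dephasing_op D (p,q) =
    mat m m (\<lambda>(s,t). if s = q \<and> t = q then of_real (D$$(p,q)) * Y$$(p,p) else 0)"
proof (rule eq_matI)
  fix s t assume "s < dim_row (mat m m (\<lambda>(s,t). if s = q \<and> t = q then of_real (D$$(p,q)) * Y$$(p,p) else 0))"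
    "t < dim_col (mat m m (\<lambda>(s,t). if s = q \<and> t = q then of_real (D$$(p,q)) * Y$$(p,p) else 0))"
  then have st: "s < m" "t < m" by auto
  have d: "D$$(p,q) \<ge> 0" using D pq by (simp add: nonneg_mat_def)
  let ?E = "dephasing_op D (p,q)" and ?c = "complex_of_real (sqrt (D$$(p,q)))"
  have Ee: "?E$$(i,j) = (if i = p \<and> j = q then ?c else 0)" if "i < n" "j < m" for i j
    using that D(1) by (simp add: dephasing_op_def)
  have "(cadj ?E * Y * ?E) $$ (s,t) = (\<Sum>i<n. \<Sum>l<n. cnj (?E$$(i,s)) * Y$$(i,l) * ?E$$(l,t))"
    by (rule congruence_entry[OF dephasing_op_carrier[OF D(1)] Y st])
  also have "\<dots> = (if s = q \<and> t = q then of_real (D$$(p,q)) * Y$$(p,p) else 0)"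
  proof (cases "s = q \<and> t = q")
    case True
    have E: "?E$$(i,q) = (if i = p then ?c else 0)" if "i < n" for i
      using that pq Ee by simp
    have cnj_if: "cnj (if P then x else 0) = (if P then cnj x else 0)" for P x by simp
    have "(\<Sum>i<n. \<Sum>l<n. cnj (?E$$(i,s)) * Y$$(i,l) * ?E$$(l,t)) = cnj ?c * Y$$(p,p) * ?c"
      using True pq by (simp add: E cnj_if if_zero_mult mult_if_zero sum.delta)
    then show ?thesis using True sqrt_square_complex[OF d] by (simp add: mult.commute)
  next
    case False
    then have "cnj (?E$$(i,s)) * Y$$(i,l) * ?E$$(l,t) = 0" if "i < n" "l < n" for i l
      using that st False Ee by auto
    then have "(\<Sum>i<n. \<Sum>l<n. cnj (?E$$(i,s)) * Y$$(i,l) * ?E$$(l,t)) = 0"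
      by (auto intro!: sum.neutral)
    with False show ?thesis by (simp only: if_False)
  qed
  finally show "(cadj ?E * Y * ?E) $$ (s,t) =
      mat m m (\<lambda>(s,t). if s = q \<and> t = q then of_real (D$$(p,q)) * Y$$(p,p) else 0) $$ (s,t)"
    using st by simp
qed (use dephasing_op_carrier[OF D(1), of "(p,q)"] in auto)

lemma dephasing_kraus:
  assumes D: "D \<in> carrier_mat n m" "nonneg_mat D" and Y: "Y \<in> carrier_mat n n"
  shows "kraus_map m (dephasing_op D) ({..<n} \<times> {..<m}) Y =
    mat m m (\<lambda>(s,t). if s = t then \<Sum>p<n. of_real (D$$(p,s)) * Y$$(p,p) else 0)"
proof (rule eq_matI)
  fix s t assume "s < dim_row (mat m m (\<lambda>(s,t). if s = t then \<Sum>p<n. of_real (D$$(p,s)) * Y$$(p,p) else 0))"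
    "t < dim_col (mat m m (\<lambda>(s,t). if s = t then \<Sum>p<n. of_real (D$$(p,s)) * Y$$(p,p) else 0))"
  then have st: "s < m" "t < m" by auto
  have "kraus_map m (dephasing_op D) ({..<n} \<times> {..<m}) Y $$ (s,t) =
      (\<Sum>p<n. \<Sum>q<m. (cadj (dephasing_op D (p,q)) * Y * dephasing_op D (p,q)) $$ (s,t))"
    using st by (simp add: kraus_map_def msum_def sum.cartesian_product)
  also have "\<dots> = (\<Sum>p<n. \<Sum>q<m. if s = q \<and> t = q then of_real (D$$(p,q)) * Y$$(p,p) else 0)"
    using st by (intro sum.cong refl) (simp add: dephasing_sandwich[OF D _ _ Y])
  also have "\<dots> = (if s = t then \<Sum>p<n. of_real (D$$(p,s)) * Y$$(p,p) else 0)"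
    using st by (cases "s = t") (auto simp: sum.delta' intro!: sum.neutral)
  finally show "kraus_map m (dephasing_op D) ({..<n} \<times> {..<m}) Y $$ (s,t) =
      mat m m (\<lambda>(s,t). if s = t then \<Sum>p<n. of_real (D$$(p,s)) * Y$$(p,p) else 0) $$ (s,t)"
    using st by simp
qed (simp_all add: kraus_map_def msum_def)

lemma dephasing_kraus_diag:
  assumes D: "D \<in> carrier_mat n m" "nonneg_mat D"
  shows "kraus_map m (dephasing_op D) ({..<n} \<times> {..<m}) (cdiag n \<alpha>) = cdiag m (\<lambda>q. \<Sum>p<n. D$$(p,q) * \<alpha> p)"
  by (auto simp: dephasing_kraus[OF D] cdiag_def intro!: eq_matI sum.cong)

lemma column_sandwich:
  assumes D: "D \<in> carrier_mat n m" "nonneg_mat D" and j: "j < m"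
  shows "cadj (Fmat D j) * cdiag n \<alpha> * Fmat D j =
    mat m m (\<lambda>(s,t). if s = j \<and> t = j then of_real (\<Sum>p<n. D$$(p,j) * \<alpha> p) else 0)"
proof (rule eq_matI)
  fix s t assume "s < dim_row (mat m m (\<lambda>(s,t). if s = j \<and> t = j then of_real (\<Sum>p<n. D$$(p,j) * \<alpha> p) else 0))"
    "t < dim_col (mat m m (\<lambda>(s,t). if s = j \<and> t = j then of_real (\<Sum>p<n. D$$(p,j) * \<alpha> p) else (0::complex)))"
  then have st: "s < m" "t < m" by auto
  let ?F = "Fmat D j"
  have Fe: "?F$$(i,s') = (if s' = j then complex_of_real (sqrt (D$$(i,j))) else 0)" if "i < n" "s' < m" for i s'
    using that D(1) by (simp add: Fmat_def)
  have diag: "cdiag n \<alpha> \<in> carrier_mat n n" by (simp add: cdiag_def)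
  have "(cadj ?F * cdiag n \<alpha> * ?F) $$ (s,t) = (\<Sum>i<n. \<Sum>l<n. cnj (?F$$(i,s)) * cdiag n \<alpha> $$ (i,l) * ?F$$(l,t))"
    by (rule congruence_entry[OF Fmat_carrier[OF D(1)] diag st])
  also have "\<dots> = (if s = j \<and> t = j then of_real (\<Sum>p<n. D$$(p,j) * \<alpha> p) else 0)"
  proof (cases "s = j \<and> t = j")
    case True
    have "(\<Sum>i<n. \<Sum>l<n. cnj (?F$$(i,s)) * cdiag n \<alpha> $$ (i,l) * ?F$$(l,t)) =
        (\<Sum>i<n. complex_of_real (sqrt (D$$(i,j))) * of_real (\<alpha> i) * complex_of_real (sqrt (D$$(i,j))))"
      using True j by (intro sum.cong refl) (simp add: Fe cdiag_def if_zero_mult mult_if_zero sum.delta')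
    also have "\<dots> = of_real (\<Sum>p<n. D$$(p,j) * \<alpha> p)"
      using D j by (simp add: nonneg_mat_def sqrt_square_complex mult.commute mult.left_commute)
    finally show ?thesis using True by simp
  next
    case False
    then have "cnj (?F$$(i,s)) * cdiag n \<alpha> $$ (i,l) * ?F$$(l,t) = 0" if "i < n" "l < n" for i l
      using that st Fe by auto
    then have "(\<Sum>i<n. \<Sum>l<n. cnj (?F$$(i,s)) * cdiag n \<alpha> $$ (i,l) * ?F$$(l,t)) = 0"
      by (auto intro!: sum.neutral)
    with False show ?thesis by (simp only: if_False)
  qed
  finally show "(cadj ?F * cdiag n \<alpha> * ?F) $$ (s,t) =
      mat m m (\<lambda>(s,t). if s = j \<and> t = j then of_real (\<Sum>p<n. D$$(p,j) * \<alpha> p) else 0) $$ (s,t)"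
    using st by simp
qed (use Fmat_carrier[OF D(1), of j] in auto)

lemma column_kraus_diag:
  assumes D: "D \<in> carrier_mat n m" "nonneg_mat D"
  shows "kraus_map m (Fmat D) {..<m} (cdiag n \<alpha>) = cdiag m (\<lambda>q. \<Sum>p<n. D$$(p,q) * \<alpha> p)"
proof (rule eq_matI)
  fix s t assume "s < dim_row (cdiag m (\<lambda>q. \<Sum>p<n. D$$(p,q) * \<alpha> p))" "t < dim_col (cdiag m (\<lambda>q. \<Sum>p<n. D$$(p,q) * \<alpha> p))"
  then have st: "s < m" "t < m" by (auto simp: cdiag_def)
  have "kraus_map m (Fmat D) {..<m} (cdiag n \<alpha>) $$ (s,t) =
      (\<Sum>j<m. if s = j \<and> t = j then complex_of_real (\<Sum>p<n. D$$(p,j) * \<alpha> p) else 0)"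
    using st by (simp add: kraus_map_def msum_def column_sandwich[OF D])
  also have "\<dots> = cdiag m (\<lambda>q. \<Sum>p<n. D$$(p,q) * \<alpha> p) $$ (s,t)"
    using st by (cases "s = t") (auto simp: cdiag_def sum.delta' intro!: sum.neutral)
  finally show "kraus_map m (Fmat D) {..<m} (cdiag n \<alpha>) $$ (s,t) = cdiag m (\<lambda>q. \<Sum>p<n. D$$(p,q) * \<alpha> p) $$ (s,t)" .
qed (simp_all add: kraus_map_def msum_def cdiag_def)

section \<open>Realising a nonnegative matrix by a completely positive map\<close>

lemma kraus_map_transfers_diagonal:
  assumes J: "finite J" and U: "unitary_mat n U" and V: "unitary_mat m V"
    and G: "\<forall>j\<in>J. G j \<in> carrier_mat n m"
    and A: "A \<in> carrier_mat n n" and dA: "cadj U * A * U = cdiag n \<alpha>"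
    and B: "B \<in> carrier_mat m m" and dB: "V * B * cadj V = cdiag m \<beta>"
    and G_diag: "kraus_map m G J (cdiag n \<alpha>) = cdiag m \<beta>"
  shows "kraus_map m (\<lambda>j. U * G j * V) J A = B"
proof -
  have "kraus_map m (\<lambda>j. U * G j * V) J A = cadj V * cdiag m \<beta> * V"
    using kraus_map_frame[OF J unitary_carrier[OF U] unitary_carrier[OF V] G A] dA G_diag by simp
  also have "\<dots> = B"
    using unitary_unconjugate[OF unitary_cadj[OF V] B] dB by simp
  finally show ?thesis .
qed

definition diag_channel :: "nat \<Rightarrow> nat \<Rightarrow> complex mat \<Rightarrow> complex mat \<Rightarrow> real mat \<Rightarrow> complex mat \<Rightarrow> complex mat" where
  "diag_channel n m U V D = kraus_map m (\<lambda>pq. U * dephasing_op D pq * V) ({..<n} \<times> {..<m})"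

lemma diag_channel_cp:
  assumes "U \<in> carrier_mat n n" "V \<in> carrier_mat m m" "D \<in> carrier_mat n m"
  shows "completely_positive n m (diag_channel n m U V D)"
  unfolding diag_channel_def using assms
  by (intro kraus_map_cp) (metis dephasing_op_carrier mult_carrier_mat)

lemma diag_channel_maps:
  assumes D: "D \<in> carrier_mat n m" "nonneg_mat D" and U: "unitary_mat n U" and V: "unitary_mat m V"
    and A: "A \<in> carrier_mat n n" and dA: "cadj U * A * U = cdiag n \<alpha>"
    and B: "B \<in> carrier_mat m m" and dB: "V * B * cadj V = cdiag m (\<lambda>q. \<Sum>p<n. D$$(p,q) * \<alpha> p)"
  shows "diag_channel n m U V D A = B"
  unfolding diag_channel_def using D
  by (intro kraus_map_transfers_diagonal[OF _ U V _ A dA B dB] dephasing_kraus_diag)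
    (auto simp: dephasing_op_carrier)

lemma diag_channel_unital:
  assumes D: "D \<in> carrier_mat n m" "column_stochastic D" and U: "unitary_mat n U" and V: "unitary_mat m V"
  shows "unital_map n m (diag_channel n m U V D)"
proof -
  have col: "cdiag m (\<lambda>q. \<Sum>p<n. D$$(p,q) * 1) = 1\<^sub>m m"
    using D by (auto simp: cdiag_def column_stochastic_def intro!: eq_matI)
  have "cadj U * 1\<^sub>m n * U = cdiag n (\<lambda>_. 1)"
    using unitary_conj_one[OF U] by (simp add: cdiag_one)
  moreover have "V * 1\<^sub>m m * cadj V = 1\<^sub>m m"
    using unitary_conj_one[OF unitary_cadj[OF V]] by simp
  ultimately show ?thesis
    unfolding unital_map_def using D U V col
    by (intro diag_channel_maps) (auto simp: column_stochastic_def)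
qed

lemma diag_channel_trace_preserving:
  assumes D: "D \<in> carrier_mat n m" "row_stochastic D" and U: "unitary_mat n U" and V: "unitary_mat m V"
  shows "trace_preserving n (diag_channel n m U V D)"
  unfolding trace_preserving_def
proof
  fix X :: "complex mat" assume X: "X \<in> carrier_mat n n"
  have Dn: "nonneg_mat D" using D by (simp add: row_stochastic_def)
  have Uc: "U \<in> carrier_mat n n" and Vc: "V \<in> carrier_mat m m"
    using U V by (simp_all add: unitary_carrier)
  define Y where "Y = cadj U * X * U"
  have Y: "Y \<in> carrier_mat n n" using Uc X by (simp add: Y_def)
  let ?K = "kraus_map m (dephasing_op D) ({..<n} \<times> {..<m}) Y"
  have "mtrace (diag_channel n m U V D X) = mtrace (cadj V * ?K * V)"
    unfolding diag_channel_def Y_def using D Uc Vc X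
    by (subst kraus_map_frame) (auto simp: dephasing_op_carrier)
  also have "\<dots> = mtrace ?K"
    using mtrace_unitary_conj[OF unitary_cadj[OF V], of ?K] by (simp add: kraus_map_def)
  also have "\<dots> = (\<Sum>s<m. \<Sum>p<n. of_real (D$$(p,s)) * Y$$(p,p))"
    by (simp add: mtrace_def dephasing_kraus[OF D(1) Dn Y])
  also have "\<dots> = (\<Sum>p<n. (\<Sum>s<m. of_real (D$$(p,s))) * Y$$(p,p))"
    by (subst sum.swap) (simp add: sum_distrib_right)
  also have "\<dots> = mtrace Y"
    using D Y by (simp add: mtrace_def row_stochastic_def flip: of_real_sum)
  also have "\<dots> = mtrace X"
    using mtrace_unitary_conj[OF unitary_cadj[OF U] X] by (simp add: Y_def)
  finally show "mtrace (diag_channel n m U V D X) = mtrace X" .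
qed

section \<open>The transition matrix of a completely positive map\<close>

definition col_proj :: "nat \<Rightarrow> complex mat \<Rightarrow> nat \<Rightarrow> complex mat" where
  "col_proj n U p = mat n n (\<lambda>(i,j). U$$(i,p) * cnj (U$$(j,p)))"

lemma col_proj_carrier [simp]: "col_proj n U p \<in> carrier_mat n n"
  by (simp add: col_proj_def)

text \<open>Being of the form \<open>u u\<^sup>*\<close>, it is positive semidefinite: \<open>x\<^sup>* u u\<^sup>* x = |u\<^sup>* x|\<^sup>2\<close>.\<close>
lemma col_proj_psd: "psd_mat n (col_proj n U p)"
  unfolding psd_mat_def
proof (intro conjI ballI)
  show "hermitian_mat n (col_proj n U p)"
    unfolding hermitian_mat_def by (auto simp: col_proj_def cadj_def intro!: eq_matI)
next
  fix x :: "complex vec" assume x: "x \<in> carrier_vec n"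
  define c where "c = (\<Sum>j<n. cnj (U$$(j,p)) * x$j)"
  have "conjugate x \<bullet> (col_proj n U p *\<^sub>v x) = (\<Sum>i<n. cnj (x$i) * (\<Sum>j<n. col_proj n U p $$ (i,j) * x$j))"
    by (rule qf_entry[OF col_proj_carrier x])
  also have "\<dots> = (\<Sum>i<n. cnj (x$i) * U$$(i,p)) * c"
    by (simp add: col_proj_def c_def sum_distrib_left sum_distrib_right mult_ac)
  also have "\<dots> = cnj c * c" by (simp add: c_def cnj_sum mult_ac)
  also have "\<dots> = of_real ((cmod c)\<^sup>2)" using complex_norm_square[of c] by (simp add: mult.commute)
  finally have qf: "conjugate x \<bullet> (col_proj n U p *\<^sub>v x) = of_real ((cmod c)\<^sup>2)" .
  show "Re (conjugate x \<bullet> (col_proj n U p *\<^sub>v x)) \<ge> 0" "Im (conjugate x \<bullet> (col_proj n U p *\<^sub>v x)) = 0"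
    unfolding qf by simp_all
qed

lemma spectral_msum:
  assumes U: "unitary_mat n U" and A: "A \<in> carrier_mat n n" and dA: "cadj U * A * U = cdiag n \<alpha>"
  shows "A = msum n n (\<lambda>p. complex_of_real (\<alpha> p) \<cdot>\<^sub>m col_proj n U p) {..<n}"
proof (rule eq_matI)
  fix i j assume "i < dim_row (msum n n (\<lambda>p. complex_of_real (\<alpha> p) \<cdot>\<^sub>m col_proj n U p) {..<n})"
    "j < dim_col (msum n n (\<lambda>p. complex_of_real (\<alpha> p) \<cdot>\<^sub>m col_proj n U p) {..<n})"
  then have ij: "i < n" "j < n" by (simp_all add: msum_def)
  have Uc: "U \<in> carrier_mat n n" using U by (simp add: unitary_carrier)
  then have cU: "cadj U \<in> carrier_mat n n" by simp
  have "A = cadj (cadj U) * cdiag n \<alpha> * cadj U"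
    using unitary_unconjugate[OF U A dA] by simp
  then have "A $$ (i,j) = (\<Sum>r<n. \<Sum>l<n. cnj (cadj U $$ (r,i)) * cdiag n \<alpha> $$ (r,l) * cadj U $$ (l,j))"
    using congruence_entry[OF cU _ ij] by (simp add: cdiag_def)
  also have "\<dots> = (\<Sum>p<n. complex_of_real (\<alpha> p) * (U$$(i,p) * cnj (U$$(j,p))))"
    using Uc ij by (intro sum.cong refl) (simp add: cdiag_def if_zero_mult mult_if_zero sum.delta mult_ac)
  finally show "A $$ (i,j) = msum n n (\<lambda>p. complex_of_real (\<alpha> p) \<cdot>\<^sub>m col_proj n U p) {..<n} $$ (i,j)"
    using ij by (simp add: msum_def col_proj_def)
qed (use A in \<open>simp_all add: msum_def\<close>)

lemma cp_positive:
  assumes cp: "completely_positive n m \<Phi>" and X: "X \<in> carrier_mat n n" and psd: "psd_mat n X"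
  shows "psd_mat m (\<Phi> X)"
proof -
  have PX: "\<Phi> X \<in> carrier_mat m m" using cp X by (simp add: completely_positive_def linear_map_mat_def)
  have "block n X 0 0 = X" using X by (auto simp: block_def intro!: eq_matI)
  then have amp: "ampliate n m 1 \<Phi> X = \<Phi> X"
    using PX by (intro eq_matI) (auto simp: ampliate_def)
  have "\<forall>k\<ge>1. \<forall>X. psd_mat (k*n) X \<longrightarrow> psd_mat (k*m) (ampliate n m k \<Phi> X)"
    using cp by (simp add: completely_positive_def)
  moreover have "psd_mat (1*n) X" using psd by simp
  ultimately have "psd_mat (1*m) (ampliate n m 1 \<Phi> X)" by blast
  then show ?thesis using amp by simp
qed

lemma congruence_diag_qf:
  assumes K: "K \<in> carrier_mat N m" and M: "M \<in> carrier_mat N N" and q: "q < m"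
  shows "(cadj K * M * K) $$ (q,q) = conjugate (col K q) \<bullet> (M *\<^sub>v col K q)"
  using K q by (simp add: congruence_entry[OF K M q q] qf_entry[OF M] sum_distrib_left mult_ac)

lemma psd_congruence_diag:
  assumes K: "K \<in> carrier_mat N m" and psd: "psd_mat N M" and q: "q < m"
  shows "Re ((cadj K * M * K) $$ (q,q)) \<ge> 0" "Im ((cadj K * M * K) $$ (q,q)) = 0"
proof -
  have M: "M \<in> carrier_mat N N" using psd unfolding psd_mat_def hermitian_mat_def by blast
  have "col K q \<in> carrier_vec N" by (rule col_carrier_vec[OF q K])
  then show "Re ((cadj K * M * K) $$ (q,q)) \<ge> 0" "Im ((cadj K * M * K) $$ (q,q)) = 0"
    using psd unfolding congruence_diag_qf[OF K M q] psd_mat_def by blast+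
qed

definition transition_matrix :: "nat \<Rightarrow> nat \<Rightarrow> complex mat \<Rightarrow> complex mat \<Rightarrow> (complex mat \<Rightarrow> complex mat) \<Rightarrow> real mat" where
  "transition_matrix n m U V \<Phi> = mat n m (\<lambda>(p,q). Re ((V * \<Phi> (col_proj n U p) * cadj V) $$ (q,q)))"

lemma transition_matrix_carrier: "transition_matrix n m U V \<Phi> \<in> carrier_mat n m"
  by (simp add: transition_matrix_def)

lemma transition_matrix_dims [simp]:
  "dim_row (transition_matrix n m U V \<Phi>) = n" "dim_col (transition_matrix n m U V \<Phi>) = m"
  by (simp_all add: transition_matrix_def)

text \<open>For completely positive \<open>\<Phi>\<close> the defining diagonal entries are real and nonnegative, so
  taking the real part loses nothing.\<close>
lemma transition_matrix_entry:
  assumes cp: "completely_positive n m \<Phi>" and V: "V \<in> carrier_mat m m" and pq: "p < n" "q < m"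
  shows "complex_of_real (transition_matrix n m U V \<Phi> $$ (p,q)) = (V * \<Phi> (col_proj n U p) * cadj V) $$ (q,q)"
    and "transition_matrix n m U V \<Phi> $$ (p,q) \<ge> 0"
proof -
  have psd: "psd_mat m (\<Phi> (col_proj n U p))" by (rule cp_positive[OF cp col_proj_carrier col_proj_psd])
  have cV: "cadj V \<in> carrier_mat m m" using V by simp
  show "complex_of_real (transition_matrix n m U V \<Phi> $$ (p,q)) = (V * \<Phi> (col_proj n U p) * cadj V) $$ (q,q)"
    using psd_congruence_diag(2)[OF cV psd pq(2)] pq by (simp add: transition_matrix_def complex_eq_iff)
  show "transition_matrix n m U V \<Phi> $$ (p,q) \<ge> 0"
    using psd_congruence_diag(1)[OF cV psd pq(2)] pq by (simp add: transition_matrix_def)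
qed

lemma transition_matrix_action:
  assumes cp: "completely_positive n m \<Phi>" and U: "unitary_mat n U" and V: "V \<in> carrier_mat m m"
    and A: "A \<in> carrier_mat n n" and dA: "cadj U * A * U = cdiag n \<alpha>" and q: "q < m"
  shows "(V * \<Phi> A * cadj V) $$ (q,q) = of_real (\<Sum>p<n. \<alpha> p * transition_matrix n m U V \<Phi> $$ (p,q))"
proof -
  have L: "linear_map_mat n m \<Phi>" using cp by (simp add: completely_positive_def)
  have cV: "cadj V \<in> carrier_mat m m" using V by simp
  have "V * \<Phi> A * cadj V = cadj (cadj V) * msum m m (\<lambda>p. complex_of_real (\<alpha> p) \<cdot>\<^sub>m \<Phi> (col_proj n U p)) {..<n} * cadj V"
    by (subst spectral_msum[OF U A dA]) (simp add: linear_map_lincomb[OF L])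
  also have "\<dots> = msum m m (\<lambda>p. complex_of_real (\<alpha> p) \<cdot>\<^sub>m (V * \<Phi> (col_proj n U p) * cadj V)) {..<n}"
    using L by (subst linear_map_lincomb[OF congruence_linear[OF cV]]) (auto simp: linear_map_mat_def)
  finally show ?thesis
    using q cp V by (simp add: msum_def transition_matrix_entry)
qed

lemma transition_matrix_nonneg:
  assumes "completely_positive n m \<Phi>" "V \<in> carrier_mat m m"
  shows "nonneg_mat (transition_matrix n m U V \<Phi>)"
  using transition_matrix_entry(2)[OF assms] by (simp add: nonneg_mat_def transition_matrix_def)

lemma transition_matrix_factorises:
  assumes cp: "completely_positive n m \<Phi>" and U: "unitary_mat n U" and V: "unitary_mat m V"
    and a: "a \<in> carrier_mat k n" and b: "b \<in> carrier_mat k m"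
    and A: "\<forall>i<k. A i \<in> carrier_mat n n" and dA: "\<forall>i<k. cadj U * A i * U = cdiag n (\<lambda>j. a $$ (i,j))"
    and dB: "\<forall>i<k. V * B i * cadj V = cdiag m (\<lambda>j. b $$ (i,j))"
    and maps: "\<forall>i<k. \<Phi> (A i) = B i"
  shows "b = a * transition_matrix n m U V \<Phi>"
proof (rule eq_matI)
  fix i q assume "i < dim_row (a * transition_matrix n m U V \<Phi>)" "q < dim_col (a * transition_matrix n m U V \<Phi>)"
  then have iq: "i < k" "q < m" using a by auto
  have "complex_of_real (b $$ (i,q)) = (V * \<Phi> (A i) * cadj V) $$ (q,q)"
    using dB maps iq by (simp add: cdiag_def)
  also have "\<dots> = of_real (\<Sum>p<n. a $$ (i,p) * transition_matrix n m U V \<Phi> $$ (p,q))"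
    using A dA iq by (intro transition_matrix_action[OF cp U unitary_carrier[OF V]]) auto
  finally have "b $$ (i,q) = (\<Sum>p<n. a $$ (i,p) * transition_matrix n m U V \<Phi> $$ (p,q))"
    by (simp only: of_real_eq_iff)
  also have "\<dots> = (a * transition_matrix n m U V \<Phi>) $$ (i,q)"
    using mult_entry[OF a transition_matrix_carrier iq] by simp
  finally show "b $$ (i,q) = (a * transition_matrix n m U V \<Phi>) $$ (i,q)" .
qed (use a b in simp_all)

lemma transition_matrix_column_stochastic:
  assumes cp: "completely_positive n m \<Phi>" and un: "unital_map n m \<Phi>"
    and U: "unitary_mat n U" and V: "unitary_mat m V"
  shows "column_stochastic (transition_matrix n m U V \<Phi>)"
  unfolding column_stochastic_def
proof (intro conjI allI impI transition_matrix_nonneg[OF cp unitary_carrier[OF V]])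
  fix q assume "q < dim_col (transition_matrix n m U V \<Phi>)"
  then have q: "q < m" by simp
  have one: "cadj U * 1\<^sub>m n * U = cdiag n (\<lambda>_. 1)"
    using unitary_conj_one[OF U] by (simp add: cdiag_one)
  have "1 = (V * \<Phi> (1\<^sub>m n) * cadj V) $$ (q,q)"
    using un q unitary_conj_one[OF unitary_cadj[OF V]] by (simp add: unital_map_def)
  also have "\<dots> = of_real (\<Sum>p<n. transition_matrix n m U V \<Phi> $$ (p,q))"
    using transition_matrix_action[OF cp U unitary_carrier[OF V] _ one q] by simp
  finally have "complex_of_real (\<Sum>p<n. transition_matrix n m U V \<Phi> $$ (p,q)) = 1" by simp
  then show "(\<Sum>p<dim_row (transition_matrix n m U V \<Phi>). transition_matrix n m U V \<Phi> $$ (p,q)) = 1"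
    by (simp only: of_real_eq_1_iff transition_matrix_dims)
qed

lemma transition_matrix_row_stochastic:
  assumes cp: "completely_positive n m \<Phi>" and tp: "trace_preserving n \<Phi>"
    and U: "unitary_mat n U" and V: "unitary_mat m V"
  shows "row_stochastic (transition_matrix n m U V \<Phi>)"
  unfolding row_stochastic_def
proof (intro conjI allI impI transition_matrix_nonneg[OF cp unitary_carrier[OF V]])
  fix p assume "p < dim_row (transition_matrix n m U V \<Phi>)"
  then have p: "p < n" by simp
  have P: "\<Phi> (col_proj n U p) \<in> carrier_mat m m"
    using cp by (simp add: completely_positive_def linear_map_mat_def)
  have "complex_of_real (\<Sum>q<m. transition_matrix n m U V \<Phi> $$ (p,q)) = mtrace (V * \<Phi> (col_proj n U p) * cadj V)"
    using P unitary_carrier[OF V] p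
    by (simp add: mtrace_def transition_matrix_entry(1)[OF cp unitary_carrier[OF V] p])
  also have "\<dots> = mtrace (col_proj n U p)"
    using tp mtrace_unitary_conj[OF V P] by (simp add: trace_preserving_def)
  also have "\<dots> = (cadj U * U) $$ (p,p)"
    using mult_entry[OF cadj_carrier[OF unitary_carrier[OF U]] unitary_carrier[OF U] p p] unitary_carrier[OF U] p
    by (simp add: mtrace_def col_proj_def mult.commute)
  also have "\<dots> = 1" using U p by (simp add: unitary_mat_def)
  finally show "(\<Sum>q<dim_col (transition_matrix n m U V \<Phi>). transition_matrix n m U V \<Phi> $$ (p,q)) = 1"
    by (simp only: of_real_eq_1_iff transition_matrix_dims)
qed

lemma unital_trace_preserving_dim:
  assumes "unital_map n m \<Phi>" "trace_preserving n \<Phi>"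
  shows "m = n"
proof -
  have "(of_nat m :: complex) = mtrace (\<Phi> (1\<^sub>m n))" using assms(1) by (simp add: unital_map_def mtrace_one)
  also have "\<dots> = of_nat n" using assms(2) by (simp add: trace_preserving_def mtrace_one)
  finally show ?thesis by simp
qed

lemma transition_matrix_doubly_stochastic:
  assumes "completely_positive n m \<Phi>" "unital_map n m \<Phi>" "trace_preserving n \<Phi>"
    and U: "unitary_mat n U" and V: "unitary_mat m V"
  shows "doubly_stochastic (transition_matrix n m U V \<Phi>)"
  using transition_matrix_column_stochastic[OF assms(1,2) U V] transition_matrix_row_stochastic[OF assms(1,3) U V]
    unital_trace_preserving_dim[OF assms(2,3)]
  by (simp add: doubly_stochastic_def)

lemma column_kraus_maps:
  assumes D: "D \<in> carrier_mat n m" "nonneg_mat D" and U: "unitary_mat n U" and V: "unitary_mat m V"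
    and A: "A \<in> carrier_mat n n" and dA: "cadj U * A * U = cdiag n \<alpha>"
    and B: "B \<in> carrier_mat m m" and dB: "V * B * cadj V = cdiag m (\<lambda>q. \<Sum>p<n. D$$(p,q) * \<alpha> p)"
  shows "kraus_map m (\<lambda>j. U * Fmat D j * V) {..<m} A = B"
  by (intro kraus_map_transfers_diagonal[OF _ U V _ A dA B dB] column_kraus_diag[OF D])
    (auto simp: Fmat_carrier[OF D(1)])

lemma factorised_diag:
  assumes a: "a \<in> carrier_mat k n" and D: "D \<in> carrier_mat n m" and bD: "b = a * D" and i: "i < k"
  shows "cdiag m (\<lambda>j. b $$ (i,j)) = cdiag m (\<lambda>q. \<Sum>p<n. D$$(p,q) * a$$(i,p))"
  using a D i by (auto simp: cdiag_def bD mult_entry[OF a D] mult.commute intro!: eq_matI)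

lemma nonneg_factor_realised:
  assumes U: "unitary_mat n U" and V: "unitary_mat m V" and a: "a \<in> carrier_mat k n"
    and Ac: "\<forall>i<k. A i \<in> carrier_mat n n" and Bc: "\<forall>i<k. B i \<in> carrier_mat m m"
    and A_diag: "\<forall>i<k. cadj U * A i * U = cdiag n (\<lambda>j. a $$ (i,j))"
    and B_diag: "\<forall>i<k. V * B i * cadj V = cdiag m (\<lambda>j. b $$ (i,j))"
    and D: "D \<in> carrier_mat n m" "nonneg_mat D" and bD: "b = a * D"
  shows "completely_positive n m (diag_channel n m U V D) \<and> (\<forall>i<k. diag_channel n m U V D (A i) = B i)
    \<and> (\<forall>i<k. B i = msum m m (\<lambda>j. cadj (U * Fmat D j * V) * A i * (U * Fmat D j * V)) {..<m})"
proof -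
  have dB: "V * B i * cadj V = cdiag m (\<lambda>q. \<Sum>p<n. D$$(p,q) * a$$(i,p))" if "i < k" for i
    using B_diag factorised_diag[OF a D(1) bD that] that by simp
  show ?thesis
    using diag_channel_cp[OF unitary_carrier[OF U] unitary_carrier[OF V] D(1)]
      diag_channel_maps[OF D U V] column_kraus_maps[OF D U V] Ac Bc A_diag dB
    by (auto simp: kraus_map_def)
qed

lemma stochastic_parts:
  "column_stochastic D \<Longrightarrow> nonneg_mat D" "row_stochastic D \<Longrightarrow> nonneg_mat D"
  "doubly_stochastic D \<Longrightarrow> column_stochastic D" "doubly_stochastic D \<Longrightarrow> row_stochastic D"
  unfolding column_stochastic_def row_stochastic_def doubly_stochastic_def by blast+

theorem theorem2p1:
  fixes n m k :: nat and A B :: "nat \<Rightarrow> complex mat" and U V :: "complex mat"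
    and a b :: "real mat"
  assumes n: "n > 0" and m: "m > 0"
    and A_herm: "\<forall>i<k. hermitian_mat n (A i)"
    and B_herm: "\<forall>i<k. hermitian_mat m (B i)"
    and A_comm: "\<forall>i<k. \<forall>j<k. A i * A j = A j * A i"
    and B_comm: "\<forall>i<k. \<forall>j<k. B i * B j = B j * B i"
    and U: "unitary_mat n U" and V: "unitary_mat m V"
    and a: "a \<in> carrier_mat k n" and b: "b \<in> carrier_mat k m"
    and A_diag: "\<forall>i<k. cadj U * A i * U = cdiag n (\<lambda>j. a $$ (i,j))"
    and B_diag: "\<forall>i<k. V * B i * cadj V = cdiag m (\<lambda>j. b $$ (i,j))"
  shows
    "((\<exists>\<Phi>. completely_positive n m \<Phi> \<and> (\<forall>i<k. \<Phi> (A i) = B i)) \<longleftrightarrow>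
      (\<exists>D \<in> carrier_mat n m. nonneg_mat D \<and> b = a * D))
   \<and> (\<forall>D \<in> carrier_mat n m. nonneg_mat D \<and> b = a * D \<longrightarrow>
        (\<forall>i<k. B i = msum m m (\<lambda>j. cadj (U * Fmat D j * V) * A i * (U * Fmat D j * V)) {..<m}))
   \<and> ((\<exists>\<Phi>. completely_positive n m \<Phi> \<and> unital_map n m \<Phi> \<and> (\<forall>i<k. \<Phi> (A i) = B i)) \<longleftrightarrow>
      (\<exists>D \<in> carrier_mat n m. column_stochastic D \<and> b = a * D))
   \<and> ((\<exists>\<Phi>. completely_positive n m \<Phi> \<and> trace_preserving n \<Phi> \<and> (\<forall>i<k. \<Phi> (A i) = B i)) \<longleftrightarrow>
      (\<exists>D \<in> carrier_mat n m. row_stochastic D \<and> b = a * D))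
   \<and> ((\<exists>\<Phi>. completely_positive n m \<Phi> \<and> unital_map n m \<Phi> \<and> trace_preserving n \<Phi>
          \<and> (\<forall>i<k. \<Phi> (A i) = B i)) \<longleftrightarrow>
      (\<exists>D \<in> carrier_mat n m. doubly_stochastic D \<and> b = a * D))
   \<and> ((\<exists>\<Phi>. completely_positive n m \<Phi> \<and> unital_map n m \<Phi> \<and> trace_preserving n \<Phi>
          \<and> (\<forall>i<k. \<Phi> (A i) = B i)) \<longrightarrow> m = n)"
proof -
  have Ac: "\<forall>i<k. A i \<in> carrier_mat n n" and Bc: "\<forall>i<k. B i \<in> carrier_mat m m"
    using A_herm B_herm by (simp_all add: hermitian_mat_def)
  note realise = nonneg_factor_realised[OF U V a Ac Bc A_diag B_diag]
  note factor = transition_matrix_carrier transition_matrix_nonneg[OF _ unitary_carrier[OF V]]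
    transition_matrix_factorises[OF _ U V a b Ac A_diag B_diag]
  note unital = diag_channel_unital[OF _ _ U V] transition_matrix_column_stochastic[OF _ _ U V]
  note tp = diag_channel_trace_preserving[OF _ _ U V] transition_matrix_row_stochastic[OF _ _ U V]
  note doubly = transition_matrix_doubly_stochastic[OF _ _ _ U V]
  (* In each equivalence a map Phi yields the factor D = T(Phi), and a factor D yields the map Psi_D. *)
  show ?thesis
    apply (intro conjI)
    subgoal using realise factor by meson
    subgoal using realise by blast
    subgoal using realise factor stochastic_parts unital by meson
    subgoal using realise factor stochastic_parts tp by meson
    subgoal using realise factor stochastic_parts unital tp doubly by meson
    subgoal using unital_trace_preserving_dim by blast
    done
qed

end
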